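(* There exist continuous functions $f_1,f_2:\mathrm{SO}(2)\to\mathbb{R}$ such that for every rotation $R\in\mathrm{SO}(2)$, at least one of $f_1(R)$ and $f_2(R)$ is a correct rotation angle of $R$, i.e. $\rho(f_1(R))=R$ or $\rho(f_2(R))=R$.
   Context: For $\theta\in\mathbb{R}$, $\rho(\theta)=\begin{bmatrix}\cos\theta&-\sin\theta\\ \sin\theta&\cos\theta\end{bmatrix}\in\mathrm{SO}(2)$ denotes the rotation of angle $\theta$. *)

theory Defs
  imports "HOL-Analysis.Analysis"
begin

definition rho :: "real \<Rightarrow> real^2^2" where
  "rho t = vector [vector [cos t, - sin t], vector [sin t, cos t]]"

definition SO2 :: "(real^2^2) set" where
  "SO2 = {R. rotation_matrix R}"

end

theory Submission
  imports Defs
begin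

(* The angle of a rotation R is determined up to sign by cos t = R$1$1, so both
   arccos (R$1$1) and - arccos (R$1$1) are continuous on SO(2); the sign of the
   sine entry R$2$1 decides which of the two is a correct angle. *)

lemma rotation_matrix_2_entries:
  fixes R :: "real^2^2"
  assumes "rotation_matrix R"
  shows "R$2$2 = R$1$1" and "R$1$2 = - R$2$1" and "(R$1$1)\<^sup>2 + (R$2$1)\<^sup>2 = 1"
proof -
  let ?p = "R$1$1" and ?q = "R$1$2" and ?r = "R$2$1" and ?s = "R$2$2"
  have orth: "transpose R ** R = mat 1" and det: "det R = 1"
    using assms by (auto simp: rotation_matrix_def orthogonal_matrix)
  have col1: "?p * ?p + ?r * ?r = 1"
    using arg_cong[OF orth, of "\<lambda>M. M$1$1"]
    by (simp add: matrix_matrix_mult_def sum_2 transpose_def mat_def)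
  have col2: "?q * ?q + ?s * ?s = 1"
    using arg_cong[OF orth, of "\<lambda>M. M$2$2"]
    by (simp add: matrix_matrix_mult_def sum_2 transpose_def mat_def)
  have "?p * ?s - ?q * ?r = 1"
    using det by (simp add: det_2)
  with col1 col2 have "(?p - ?s)\<^sup>2 + (?q + ?r)\<^sup>2 = 0"
    by (simp add: power2_eq_square algebra_simps)
  then have "?p - ?s = 0" and "?q + ?r = 0"
    by (simp_all add: sum_power2_eq_zero_iff)
  then show "?s = ?p" and "?q = - ?r" and "?p\<^sup>2 + ?r\<^sup>2 = 1"
    using col1 by (simp_all add: power2_eq_square)
qed

lemma rotation_matrix_2_entry_bound:
  fixes R :: "real^2^2"
  assumes "rotation_matrix R"
  shows "\<bar>R$1$1\<bar> \<le> 1"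
proof -
  have "(R$1$1)\<^sup>2 \<le> 1"
    using rotation_matrix_2_entries(3)[OF assms] by (metis le_add_same_cancel1 zero_le_power2)
  then show ?thesis
    by (simp add: abs_square_le_1)
qed

lemma rho_eq_rotation_matrix:
  fixes R :: "real^2^2"
  assumes "rotation_matrix R" and "cos t = R$1$1" and "sin t = R$2$1"
  shows "rho t = R"
  using assms rotation_matrix_2_entries[OF assms(1)]
  by (simp add: rho_def vec_eq_iff forall_2)

lemma sin_arccos_unit_circle:
  fixes a b :: real
  assumes "a\<^sup>2 + b\<^sup>2 = 1"
  shows "sin (arccos a) = \<bar>b\<bar>"
proof -
  have "\<bar>a\<bar> \<le> 1"
    using assms by (metis abs_square_le_1 le_add_same_cancel1 zero_le_power2)
  moreover have "1 - a\<^sup>2 = b\<^sup>2"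
    using assms by linarith
  ultimately show ?thesis
    by (simp add: sin_arccos_abs)
qed

lemma continuous_on_arccos_entry:
  "continuous_on SO2 (\<lambda>R. arccos (R$1$1))"
  using rotation_matrix_2_entry_bound
  by (intro continuous_on_arccos continuous_on_component continuous_on_id)
     (auto simp: SO2_def abs_le_iff)

theorem theorem4:
  shows "\<exists>f1 f2 :: real^2^2 \<Rightarrow> real.
           continuous_on SO2 f1 \<and> continuous_on SO2 f2 \<and>
           (\<forall>R\<in>SO2. rho (f1 R) = R \<or> rho (f2 R) = R)"
proof (intro exI conjI ballI)
  show "continuous_on SO2 (\<lambda>R. arccos (R$1$1))"
    by (rule continuous_on_arccos_entry)
  then show "continuous_on SO2 (\<lambda>R. - arccos (R$1$1))"
    by (rule continuous_on_minus)
  fix R assume "R \<in> SO2"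
  then have R: "rotation_matrix R"
    by (simp add: SO2_def)
  have cos: "cos (arccos (R$1$1)) = R$1$1"
    using rotation_matrix_2_entry_bound[OF R] by simp
  have sin: "sin (arccos (R$1$1)) = \<bar>R$2$1\<bar>"
    using sin_arccos_unit_circle rotation_matrix_2_entries(3)[OF R] by blast
  show "rho (arccos (R$1$1)) = R \<or> rho (- arccos (R$1$1)) = R"
    using rho_eq_rotation_matrix[OF R] cos sin by (cases "R$2$1 \<ge> 0") simp_all
qed

end
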